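(* Let $\alpha$ be a normalized, right-continuous dynamic coherent acceptability index and $(\rho^x)_{x\in(0,\infty)}$ the corresponding family of dynamic coherent risk measures. Assume that for each $x>0$ the DCRM $\rho^x$ is strongly time consistent, and that all one-step risk measures $\rho^x_{t,t+1}$ are identical across nodes in the sense of condition (I) of the context. Then, in the market model of the context (short-selling constraints), the maximal acceptability is independent of wealth, time and state: $\alpha^*_t(V_t;\omega)=\alpha^*_0(1)$ for all $t\in\{0,\dots,T-1\}$, all $\omega\in\Omega$ and all strictly positive $V_t\in L_t$.
   Context: Setting: $\mathcal T=\{0,\dots,T\}$, finite filtered probability space $(\Omega,\mathcal F,(\mathcal F_t)_{t\in\mathcal T},\mathbb P)$ with $\mathbb P$ of full support and $\mathcal F_0$ trivial; $\mathcal P_t$ is the partition of $\Omega$ generating $\mathcal F_t$; $L_t$ denotes $\mathcal F_t$-measurable random variables; $\mathbb D$ is the set of adapted real processes $D=(D_t)_{t=0}^T$ (cash flows); $\mathbb 1_{\{s\}}$ denotes the process equal to $1$ at time $s$ and $0$ otherwise, and $\mathbb 1_A$ the indicator of an event. A dynamic coherent acceptability index (DCAI) is $\alpha:\mathcal T\times\mathbb D\times\Omega\to[0,\infty]$ such that for all $t$, $D,D'\in\mathbb D$, $A\in\mathcal F_t$: (A1) $\alpha_t(D)$ is $\mathcal F_t$-measurable; (A2) if $\mathbb 1_AD_s=\mathbb 1_AD'_s$ for all $s\ge t$ then $\mathbb 1_A\alpha_t(D)=\mathbb 1_A\alpha_t(D')$; (A3) if $D_s\ge D'_s$ for all $s\ge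 t$ then $\alpha_t(D)\ge\alpha_t(D')$; (A4) $\alpha_t(\lambda D)=\alpha_t(D)$ for $\lambda\in L_t$, $\lambda>0$; (A5) $\alpha_t(\lambda D+(1-\lambda)D')\ge\min\{\alpha_t(D),\alpha_t(D')\}$ for $0\le\lambda\le1$, $\lambda\in L_t$; (A6) $\alpha_t(D+m\mathbb 1_{\{t\}})=\alpha_t(D+m\mathbb 1_{\{s\}})$ for $m\in L_t$, $s\ge t$; (A7) if $D_t\ge0\ge D'_t$ and there is $m\in L_t$ with $\alpha_{t+1}(D)\ge m\ge\alpha_{t+1}(D')$ then $\alpha_t(D)\ge m\ge\alpha_t(D')$. It is normalized if for all $t,\omega$ there are $D,D'$ with $\alpha_t(D,\omega)=\infty$, $\alpha_t(D',\omega)=0$; right-continuous if $\lim_{c\to0^+}\alpha_t(D+c\mathbb 1_{\{t\}},\omega)=\alpha_t(D,\omega)$. A dynamic coherent risk measure (DCRM) is $\rho:\mathcal T\times\mathbb D\times\Omega\to\mathbb R$ with (R1) adaptedness; (R2) independence of the past (as A2); (R3) $D_s\ge D'_s\ \forall s\ge t\Rightarrow\rho_t(D)\le\rho_t(D')$; (R4) $\rho_t(\lambda D)=\lambda\rho_t(D)$, $\lambda\in L_t$, $\lambda>0$; (R5) subadditivity; (R6) $\rho_t(D+m\mathbb 1_{\{s\}})=\rho_t(D)-m$ for $m\in L_t$, $s\ge t$; (R7) $\mathbb 1_A(\min_{\omega\in A}\rho_{t+1}(D,\omega)-D_t)\le\mathbb 1_A\rho_t(D)\le\mathbb 1_A(\max_{\omega\in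 A}\rho_{t+1}(D,\omega)-D_t)$ for $A\in\mathcal F_t$. The family corresponding to $\alpha$ is $\rho^x_t(D,\omega):=\inf\{c\in\mathbb R:\alpha_t(D+c\mathbb 1_{\{t\}},\omega)\ge x\}$, $x>0$; it is an increasing left-continuous family of DCRMs with $\alpha_t(D,\omega)=\sup\{x>0:\rho^x_t(D,\omega)\le0\}$. A DCRM is strongly time consistent if for $D,D'$ and $t<T$: $D_t=D'_t$ and $\rho_{t+1}(D)=\rho_{t+1}(D')$ imply $\rho_t(D)=\rho_t(D')$ (equivalently $\rho_t(D)=\rho_t(-\rho_{t+1}(D)\mathbb 1_{\{t+1\}})-D_t$). One-step risk measures: $\rho^x_{t,t+1}(Z,\omega):=\rho^x_t(Z\mathbb 1_{\{t+1\}})(\omega)$ for $\mathcal F_{t+1}$-measurable $Z$. Condition (I): for all $t,s$, $\Omega_t\in\mathcal P_t$, $\Omega_s\in\mathcal P_s$, $\rho^x_{t,t+1}(D_{t+1},\omega)=\rho^x_{s,s+1}(D'_{s+1},\omega')$ for all $\omega\in\Omega_t$, $\omega'\in\Omega_s$ and all $D,D'$ such that $\mathbb 1_{\Omega_t}D_{t+1}$ and $\mathbb 1_{\Omega_s}D'_{s+1}$ have the same distribution and are zero outside $\Omega_t$ resp. $\Omega_s$. Market: $d$ assets with strictly positive gross returns $R_{s+1}\in\mathbb R^d$, $s=0,\dots,T-1$, i.i.d., generating the filtration. For $\mathcal F_t$-measurable wealth $V_t>0$, $\mathcal H_t^+(V_t)$ is the set of adapted $(h_s)_{s=t}^{T-1}$,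 $h_s\in\mathbb R^d_+$, with $\mathbf 1^\top h_s=V_s$, $V_{s+1}=R_{s+1}^\top h_s$. The dividend stream of $h$ is $D_s(h)=V_s-V_{s-1}$, and $D^{[t+1,T]}(h):=(0,\dots,0,D_{t+1}(h),\dots,D_T(h))$. Maximal acceptability: $\alpha^*_t(V_t;\omega):=\sup_{h\in\mathcal H^+_t(V_t)}\alpha_t(D^{[t+1,T]}(h);\omega)$. *)

theory Defs
  imports Complex_Main "HOL-Library.Extended_Real"
begin

(* Filtration on a finite sample space 'w, described by the atoms of the
   partitions P_t: cell t w is the atom of P_t containing w. *)

type_synonym 'w proc = "nat \<Rightarrow> 'w \<Rightarrow> real"

definition meas :: "(nat \<Rightarrow> 'w \<Rightarrow> 'w set) \<Rightarrow> nat \<Rightarrow> ('w \<Rightarrow> 'b) \<Rightarrow> bool" where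
  "meas cell t X \<longleftrightarrow> (\<forall>w w'. w' \<in> cell t w \<longrightarrow> X w' = X w)"

definition evt :: "(nat \<Rightarrow> 'w \<Rightarrow> 'w set) \<Rightarrow> nat \<Rightarrow> 'w set \<Rightarrow> bool" where
  "evt cell t A \<longleftrightarrow> (\<forall>w\<in>A. cell t w \<subseteq> A)"

definition procs :: "(nat \<Rightarrow> 'w \<Rightarrow> 'w set) \<Rightarrow> nat \<Rightarrow> 'w proc set" where
  "procs cell T = {D. (\<forall>t\<le>T. meas cell t (D t)) \<and> (\<forall>t>T. D t = (\<lambda>_. 0))}"

definition ind_at :: "nat \<Rightarrow> ('w \<Rightarrow> real) \<Rightarrow> 'w proc" where
  "ind_at s m = (\<lambda>r w. if r = s then m w else 0)"

definition padd :: "'w proc \<Rightarrow> 'w proc \<Rightarrow> 'w proc" where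
  "padd D E = (\<lambda>r w. D r w + E r w)"

text \<open>lambda D and lambda D + (1-lambda) D' for F_t-measurable lambda, acting on times s >= t
  (times before t are left untouched so that the result is again adapted; by (A2) they are irrelevant).\<close>
definition scale_from :: "nat \<Rightarrow> ('w \<Rightarrow> real) \<Rightarrow> 'w proc \<Rightarrow> 'w proc" where
  "scale_from t l D = (\<lambda>s w. if s < t then D s w else l w * D s w)"

definition mix_from :: "nat \<Rightarrow> ('w \<Rightarrow> real) \<Rightarrow> 'w proc \<Rightarrow> 'w proc \<Rightarrow> 'w proc" where
  "mix_from t l D D' = (\<lambda>s w. if s < t then D s w else l w * D s w + (1 - l w) * D' s w)"

definition dcai :: "(nat \<Rightarrow> 'w \<Rightarrow> 'w set) \<Rightarrow> nat \<Rightarrow> (nat \<Rightarrow> 'w proc \<Rightarrow> 'w \<Rightarrow> ereal) \<Rightarrow> bool" where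
  "dcai cell T \<alpha> \<longleftrightarrow>
    (\<forall>t\<le>T. \<forall>D\<in>procs cell T. \<forall>w. 0 \<le> \<alpha> t D w) \<and>
    \<comment> \<open>A1\<close>
    (\<forall>t\<le>T. \<forall>D\<in>procs cell T. meas cell t (\<alpha> t D)) \<and>
    \<comment> \<open>A2\<close>
    (\<forall>t\<le>T. \<forall>D\<in>procs cell T. \<forall>D'\<in>procs cell T. \<forall>A. evt cell t A \<longrightarrow>
        (\<forall>s. t \<le> s \<longrightarrow> s \<le> T \<longrightarrow> (\<forall>w\<in>A. D s w = D' s w)) \<longrightarrow>
        (\<forall>w\<in>A. \<alpha> t D w = \<alpha> t D' w)) \<and>
    \<comment> \<open>A3\<close>
    (\<forall>t\<le>T. \<forall>D\<in>procs cell T. \<forall>D'\<in>procs cell T.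
        (\<forall>s. t \<le> s \<longrightarrow> s \<le> T \<longrightarrow> (\<forall>w. D' s w \<le> D s w)) \<longrightarrow>
        (\<forall>w. \<alpha> t D' w \<le> \<alpha> t D w)) \<and>
    \<comment> \<open>A4\<close>
    (\<forall>t\<le>T. \<forall>D\<in>procs cell T. \<forall>l. meas cell t l \<longrightarrow> (\<forall>w. 0 < l w) \<longrightarrow>
        \<alpha> t (scale_from t l D) = \<alpha> t D) \<and>
    \<comment> \<open>A5\<close>
    (\<forall>t\<le>T. \<forall>D\<in>procs cell T. \<forall>D'\<in>procs cell T. \<forall>l. meas cell t l \<longrightarrow>
        (\<forall>w. 0 \<le> l w \<and> l w \<le> 1) \<longrightarrow>
        (\<forall>w. min (\<alpha> t D w) (\<alpha> t D' w) \<le> \<alpha> t (mix_from t l D D') w)) \<and>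
    \<comment> \<open>A6\<close>
    (\<forall>t\<le>T. \<forall>D\<in>procs cell T. \<forall>m. meas cell t m \<longrightarrow>
        (\<forall>s. t \<le> s \<longrightarrow> s \<le> T \<longrightarrow> \<alpha> t (padd D (ind_at t m)) = \<alpha> t (padd D (ind_at s m)))) \<and>
    \<comment> \<open>A7\<close>
    (\<forall>t<T. \<forall>D\<in>procs cell T. \<forall>D'\<in>procs cell T. \<forall>m. meas cell t m \<longrightarrow>
        (\<forall>w. D' t w \<le> 0 \<and> 0 \<le> D t w) \<longrightarrow>
        (\<forall>w. ereal (m w) \<le> \<alpha> (t+1) D w \<and> \<alpha> (t+1) D' w \<le> ereal (m w)) \<longrightarrow>
        (\<forall>w. ereal (m w) \<le> \<alpha> t D w \<and> \<alpha> t D' w \<le> ereal (m w)))"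

definition normalized :: "(nat \<Rightarrow> 'w \<Rightarrow> 'w set) \<Rightarrow> nat \<Rightarrow> (nat \<Rightarrow> 'w proc \<Rightarrow> 'w \<Rightarrow> ereal) \<Rightarrow> bool" where
  "normalized cell T \<alpha> \<longleftrightarrow> (\<forall>t\<le>T. \<forall>w.
     (\<exists>D\<in>procs cell T. \<alpha> t D w = \<infinity>) \<and> (\<exists>D'\<in>procs cell T. \<alpha> t D' w = 0))"

definition right_cont :: "(nat \<Rightarrow> 'w \<Rightarrow> 'w set) \<Rightarrow> nat \<Rightarrow> (nat \<Rightarrow> 'w proc \<Rightarrow> 'w \<Rightarrow> ereal) \<Rightarrow> bool" where
  "right_cont cell T \<alpha> \<longleftrightarrow> (\<forall>t\<le>T. \<forall>D\<in>procs cell T. \<forall>w.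
     ((\<lambda>c::real. \<alpha> t (padd D (ind_at t (\<lambda>_. c))) w) \<longlongrightarrow> \<alpha> t D w) (at_right 0))"

definition rho :: "(nat \<Rightarrow> 'w proc \<Rightarrow> 'w \<Rightarrow> ereal) \<Rightarrow> real \<Rightarrow> nat \<Rightarrow> 'w proc \<Rightarrow> 'w \<Rightarrow> ereal" where
  "rho \<alpha> x t D w = Inf {ereal c | c. ereal x \<le> \<alpha> t (padd D (ind_at t (\<lambda>_. c))) w}"

definition strongly_tc :: "(nat \<Rightarrow> 'w \<Rightarrow> 'w set) \<Rightarrow> nat \<Rightarrow> (nat \<Rightarrow> 'w proc \<Rightarrow> 'w \<Rightarrow> ereal) \<Rightarrow> bool" where
  "strongly_tc cell T \<rho> \<longleftrightarrow> (\<forall>t<T. \<forall>D\<in>procs cell T. \<forall>D'\<in>procs cell T.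
     (\<forall>w. D t w = D' t w) \<longrightarrow> \<rho> (t+1) D = \<rho> (t+1) D' \<longrightarrow> \<rho> t D = \<rho> t D')"

definition prob :: "('w::finite \<Rightarrow> real) \<Rightarrow> 'w set \<Rightarrow> real" where
  "prob P A = (\<Sum>w\<in>A. P w)"

text \<open>Condition (I): one-step risk measures rho_{t,t+1}(Z) = rho_t(Z 1_{t+1}) agree on atoms
  on which the (conditional) laws of the positions coincide.\<close>
definition cond_I :: "('w::finite \<Rightarrow> real) \<Rightarrow> (nat \<Rightarrow> 'w \<Rightarrow> 'w set) \<Rightarrow> nat \<Rightarrow>
    (nat \<Rightarrow> 'w proc \<Rightarrow> 'w \<Rightarrow> ereal) \<Rightarrow> bool" where
  "cond_I P cell T \<rho> \<longleftrightarrow> (\<forall>t<T. \<forall>s<T. \<forall>w0 w1. \<forall>Z Z'.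
     meas cell (t+1) Z \<longrightarrow> meas cell (s+1) Z' \<longrightarrow>
     (\<forall>v. prob P (cell t w0 \<inter> {w. Z w = v}) / prob P (cell t w0)
        = prob P (cell s w1 \<inter> {w. Z' w = v}) / prob P (cell s w1)) \<longrightarrow>
     (\<forall>w\<in>cell t w0. \<forall>w'\<in>cell s w1. \<rho> t (ind_at (t+1) Z) w = \<rho> s (ind_at (s+1) Z') w'))"

text \<open>Market: gross returns R s (s = 1..T) generate the filtration.\<close>
definition ret_cell :: "(nat \<Rightarrow> 'w \<Rightarrow> 'd \<Rightarrow> real) \<Rightarrow> nat \<Rightarrow> 'w \<Rightarrow> 'w set" where
  "ret_cell R t w = {w'. \<forall>s\<in>{1..t}. R s w' = R s w}"

definition iid :: "('w::finite \<Rightarrow> real) \<Rightarrow> (nat \<Rightarrow> 'w \<Rightarrow> 'd \<Rightarrow> real) \<Rightarrow> nat \<Rightarrow> bool" where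
  "iid P R T \<longleftrightarrow>
    (\<forall>s\<in>{1..T}. \<forall>s'\<in>{1..T}. \<forall>v. prob P {w. R s w = v} = prob P {w. R s' w = v}) \<and>
    (\<forall>v. prob P {w. \<forall>s\<in>{1..T}. R s w = v s} = (\<Prod>s\<in>{1..T}. prob P {w. R s w = v s}))"

definition wealth :: "(nat \<Rightarrow> 'w \<Rightarrow> 'd::finite \<Rightarrow> real) \<Rightarrow> nat \<Rightarrow> ('w \<Rightarrow> real) \<Rightarrow>
    (nat \<Rightarrow> 'w \<Rightarrow> 'd \<Rightarrow> real) \<Rightarrow> nat \<Rightarrow> 'w \<Rightarrow> real" where
  "wealth R t V h s w = (if s \<le> t then V w else (\<Sum>i\<in>UNIV. R s w i * h (s-1) w i))"

definition portfolios :: "(nat \<Rightarrow> 'w \<Rightarrow> 'w set) \<Rightarrow> (nat \<Rightarrow> 'w \<Rightarrow> 'd::finite \<Rightarrow> real) \<Rightarrow> nat \<Rightarrow>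
    nat \<Rightarrow> ('w \<Rightarrow> real) \<Rightarrow> (nat \<Rightarrow> 'w \<Rightarrow> 'd \<Rightarrow> real) set" where
  "portfolios cell R T t V = {h. \<forall>s. t \<le> s \<and> s < T \<longrightarrow>
      (\<forall>i. meas cell s (\<lambda>w. h s w i)) \<and> (\<forall>w i. 0 \<le> h s w i) \<and>
      (\<forall>w. (\<Sum>i\<in>UNIV. h s w i) = wealth R t V h s w)}"

definition divs :: "(nat \<Rightarrow> 'w \<Rightarrow> 'd::finite \<Rightarrow> real) \<Rightarrow> nat \<Rightarrow> nat \<Rightarrow> ('w \<Rightarrow> real) \<Rightarrow>
    (nat \<Rightarrow> 'w \<Rightarrow> 'd \<Rightarrow> real) \<Rightarrow> 'w proc" where
  "divs R T t V h = (\<lambda>s w. if t < s \<and> s \<le> T then wealth R t V h s w - wealth R t V h (s-1) w else 0)"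

definition max_acc :: "(nat \<Rightarrow> 'w \<Rightarrow> 'd::finite \<Rightarrow> real) \<Rightarrow> nat \<Rightarrow> (nat \<Rightarrow> 'w proc \<Rightarrow> 'w \<Rightarrow> ereal) \<Rightarrow>
    nat \<Rightarrow> ('w \<Rightarrow> real) \<Rightarrow> 'w \<Rightarrow> ereal" where
  "max_acc R T \<alpha> t V w = (SUP h\<in>portfolios (ret_cell R) R T t V. \<alpha> t (divs R T t V h) w)"

end

theory Submission
  imports Defs "HOL-Library.FuncSet"
begin

text \<open>
  Because the returns are i.i.d. and condition (I)
  holds, the risk at time \<open>s\<close> of the one-period gain \<open>R\<^sub>s\<^sub>+\<^sub>1\<^sup>T k\<close> of a unit of wealth invested
  in the fractions \<open>k\<close> is a fixed function \<open>q\<^sub>x(k)\<close>, independent of \<open>s\<close> and of the state.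
  A strategy of wealth \<open>W\<close> has one-period dividend \<open>W\<^sub>s\<^sub>+\<^sub>1 - W\<^sub>s\<close> with risk \<open>W\<^sub>s (q\<^sub>x(k\<^sub>s) + 1)\<close>,
  and strong time consistency propagates the sign of these one-period risks backwards.
  Hence some strategy reaches acceptability level \<open>x\<close> iff \<open>q\<^sub>x(c) \<le> -1\<close> for some fixed
  mix \<open>c\<close> of the assets (if one exists, the constantly rebalanced mix \<open>c\<close> works; if none exists,
  every strategy has positive risk at its first step). This criterion mentions neither \<open>t\<close>,
  nor the state, nor the initial wealth, and the maximal acceptability is the supremum of
  the attainable levels.
\<close>

section \<open>The filtration generated by the returns\<close>

lemma ret_cell_self [simp]: "w \<in> ret_cell R t w"
  by (simp add: ret_cell_def)

lemma ret_cell_eq: "v \<in> ret_cell R t w \<Longrightarrow> ret_cell R t v = ret_cell R t w"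
  unfolding ret_cell_def by (simp add: set_eq_iff)

lemma ret_cell_antimono: "s \<le> t \<Longrightarrow> v \<in> ret_cell R t w \<Longrightarrow> v \<in> ret_cell R s w"
  unfolding ret_cell_def by simp

lemma evt_ret_cell: "evt (ret_cell R) t (ret_cell R t w)"
  unfolding evt_def by (simp add: ret_cell_eq)

lemma measD: "meas (ret_cell R) t X \<Longrightarrow> v \<in> ret_cell R t w \<Longrightarrow> X v = X w"
  unfolding meas_def by blast

lemma meas_mono: "meas (ret_cell R) s X \<Longrightarrow> s \<le> t \<Longrightarrow> meas (ret_cell R) t X"
  unfolding meas_def by (metis ret_cell_antimono)

lemma meas_const [simp]: "meas cell t (\<lambda>_. c)"
  by (simp add: meas_def)

lemma meas_uminus: "meas cell t f \<Longrightarrow> meas cell t (\<lambda>v. - f v)"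
  unfolding meas_def by simp

lemma meas_mem_ret_cell: "s \<le> t \<Longrightarrow> meas (ret_cell R) t (\<lambda>v. v \<in> ret_cell R s w)"
  unfolding meas_def ret_cell_def by auto

lemma procsD: "D \<in> procs cell T \<Longrightarrow> t \<le> T \<Longrightarrow> meas cell t (D t)"
  by (simp add: procs_def)

lemma procsI:
  "(\<And>t. t \<le> T \<Longrightarrow> meas cell t (D t)) \<Longrightarrow> (\<And>t v. T < t \<Longrightarrow> D t v = 0) \<Longrightarrow> D \<in> procs cell T"
  by (auto simp add: procs_def)

lemma zero_procs: "(\<lambda>_ _. 0) \<in> procs cell T"
  by (auto simp add: procs_def meas_def)

lemma ind_at_procs: "s \<le> T \<Longrightarrow> meas cell s m \<Longrightarrow> ind_at s m \<in> procs cell T"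
  by (auto simp add: procs_def ind_at_def meas_def)

lemma padd_procs: "D \<in> procs cell T \<Longrightarrow> E \<in> procs cell T \<Longrightarrow> padd D E \<in> procs cell T"
  by (auto simp add: procs_def padd_def meas_def)

lemma scale_from_procs:
  assumes D: "D \<in> procs (ret_cell R) T" and l: "meas (ret_cell R) t l"
  shows "scale_from t l D \<in> procs (ret_cell R) T"
proof (rule procsI)
  fix s assume "s \<le> T"
  then show "meas (ret_cell R) s (scale_from t l D s)"
    using procsD[OF D] meas_mono[OF l, of s] by (auto simp: scale_from_def meas_def)
qed (use D in \<open>auto simp: procs_def scale_from_def\<close>)

lemma patch_procs:
  assumes "t \<le> T" "D \<in> procs (ret_cell R) T" "E \<in> procs (ret_cell R) T"
  shows "(\<lambda>s v. if t \<le> s \<and> v \<in> ret_cell R t w then D s v else E s v) \<in> procs (ret_cell R) T"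
proof (rule procsI)
  fix s assume s: "s \<le> T"
  show "meas (ret_cell R) s (\<lambda>v. if t \<le> s \<and> v \<in> ret_cell R t w then D s v else E s v)"
    unfolding meas_def
  proof (intro allI impI)
    fix u u' assume u: "u' \<in> ret_cell R s u"
    have "t \<le> s \<Longrightarrow> (u' \<in> ret_cell R t w) = (u \<in> ret_cell R t w)"
      using measD[OF meas_mem_ret_cell u] by blast
    moreover have "D s u' = D s u" "E s u' = E s u"
      using measD[OF procsD[OF assms(2) s] u] measD[OF procsD[OF assms(3) s] u] .
    ultimately show "(if t \<le> s \<and> u' \<in> ret_cell R t w then D s u' else E s u') =
        (if t \<le> s \<and> u \<in> ret_cell R t w then D s u else E s u)" by auto
  qed
qed (use assms(2,3) in \<open>auto simp: procs_def\<close>)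

lemma padd_ind_at_add: "padd (padd D (ind_at t a)) (ind_at t b) = padd D (ind_at t (\<lambda>v. a v + b v))"
  by (auto simp add: padd_def ind_at_def fun_eq_iff)

lemma padd_ind_at_zero [simp]: "padd D (ind_at t (\<lambda>_. 0)) = D"
  by (auto simp add: padd_def ind_at_def fun_eq_iff)

lemma padd_ind_at_swap: "padd (padd D (ind_at s a)) (ind_at t b) = padd (padd D (ind_at t b)) (ind_at s a)"
  by (auto simp: padd_def fun_eq_iff)

lemma abs_le_sum_abs: "\<bar>f (v::'a::finite)\<bar> \<le> (\<Sum>u\<in>UNIV. \<bar>f u\<bar>::real)"
  by (rule member_le_sum) auto

section \<open>Normalized right-continuous acceptability indices\<close>

locale acceptability_index =
  fixes R :: "nat \<Rightarrow> 'w::finite \<Rightarrow> 'd::finite \<Rightarrow> real" and T :: nat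
    and \<alpha> :: "nat \<Rightarrow> 'w proc \<Rightarrow> 'w \<Rightarrow> ereal"
  assumes dcai: "dcai (ret_cell R) T \<alpha>"
    and normalized: "normalized (ret_cell R) T \<alpha>"
    and right_cont: "right_cont (ret_cell R) T \<alpha>"
begin

abbreviation "cell \<equiv> ret_cell R"
abbreviation "PR \<equiv> procs (ret_cell R) T"

lemma alpha_nonneg: "t \<le> T \<Longrightarrow> D \<in> PR \<Longrightarrow> 0 \<le> \<alpha> t D w"
  using dcai[unfolded dcai_def, THEN conjunct1] by blast

lemma alpha_meas: "t \<le> T \<Longrightarrow> D \<in> PR \<Longrightarrow> v \<in> cell t w \<Longrightarrow> \<alpha> t D v = \<alpha> t D w"
  using dcai[unfolded dcai_def, THEN conjunct2, THEN conjunct1] unfolding meas_def by blast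

lemma alpha_local:
  assumes "t \<le> T" "D \<in> PR" "D' \<in> PR"
    and "\<And>s v. t \<le> s \<Longrightarrow> s \<le> T \<Longrightarrow> v \<in> cell t w \<Longrightarrow> D s v = D' s v"
  shows "\<alpha> t D w = \<alpha> t D' w"
proof -
  have "\<forall>v\<in>cell t w. \<alpha> t D v = \<alpha> t D' v"
    using dcai[unfolded dcai_def, THEN conjunct2, THEN conjunct2, THEN conjunct1, rule_format,
        OF assms(1-3) evt_ret_cell[of R t w]] assms(4) by blast
  then show ?thesis by simp
qed

lemma alpha_mono:
  "t \<le> T \<Longrightarrow> D \<in> PR \<Longrightarrow> D' \<in> PR \<Longrightarrow> (\<And>s v. t \<le> s \<Longrightarrow> s \<le> T \<Longrightarrow> D' s v \<le> D s v) \<Longrightarrow>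
   \<alpha> t D' w \<le> \<alpha> t D w"
  using dcai[unfolded dcai_def, THEN conjunct2, THEN conjunct2, THEN conjunct2, THEN conjunct1] by blast

lemma alpha_scale:
  "t \<le> T \<Longrightarrow> D \<in> PR \<Longrightarrow> meas cell t l \<Longrightarrow> (\<And>v. 0 < l v) \<Longrightarrow> \<alpha> t (scale_from t l D) = \<alpha> t D"
  using dcai[unfolded dcai_def, THEN conjunct2, THEN conjunct2, THEN conjunct2, THEN conjunct2,
      THEN conjunct1] by blast

lemma alpha_cash_delay:
  "t \<le> T \<Longrightarrow> D \<in> PR \<Longrightarrow> meas cell t m \<Longrightarrow> t \<le> s \<Longrightarrow> s \<le> T \<Longrightarrow>
   \<alpha> t (padd D (ind_at t m)) = \<alpha> t (padd D (ind_at s m))"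
  using dcai[unfolded dcai_def, THEN conjunct2, THEN conjunct2, THEN conjunct2, THEN conjunct2,
      THEN conjunct2, THEN conjunct2, THEN conjunct1] by blast

lemma alpha_step:
  assumes "t < T" "D \<in> PR" "D' \<in> PR" "meas cell t m"
    and "\<And>v. D' t v \<le> 0" "\<And>v. 0 \<le> D t v"
    and "\<And>v. ereal (m v) \<le> \<alpha> (t+1) D v" "\<And>v. \<alpha> (t+1) D' v \<le> ereal (m v)"
  shows "ereal (m w) \<le> \<alpha> t D w \<and> \<alpha> t D' w \<le> ereal (m w)"
  using dcai[unfolded dcai_def, THEN conjunct2, THEN conjunct2, THEN conjunct2, THEN conjunct2,
      THEN conjunct2, THEN conjunct2, THEN conjunct2, rule_format,
      OF assms(1-4)] assms(5-8) by blast

lemma alpha_normalized: "t \<le> T \<Longrightarrow> (\<exists>D\<in>PR. \<alpha> t D w = \<infinity>) \<and> (\<exists>D\<in>PR. \<alpha> t D w = 0)"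
  using normalized unfolding normalized_def by blast

lemma alpha_right_cont:
  "t \<le> T \<Longrightarrow> D \<in> PR \<Longrightarrow> ((\<lambda>c. \<alpha> t (padd D (ind_at t (\<lambda>_. c))) w) \<longlongrightarrow> \<alpha> t D w) (at_right 0)"
  using right_cont unfolding right_cont_def by blast

lemma cash_procs: "t \<le> T \<Longrightarrow> D \<in> PR \<Longrightarrow> padd D (ind_at t (\<lambda>_. c)) \<in> PR"
  by (intro padd_procs ind_at_procs) auto

lemma alpha_terminal_infty:
  assumes E: "E \<in> PR" and \<delta>: "0 < \<delta>" "\<And>v. \<delta> \<le> E T v"
  shows "\<alpha> T E w = \<infinity>"
proof -
  obtain D where D: "D \<in> PR" "\<alpha> T D w = \<infinity>" using alpha_normalized[of T w] by blast
  define M where "M = (\<Sum>v\<in>UNIV. \<bar>D T v\<bar>)"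
  have M: "D T v \<le> M" "0 \<le> M" for v
    unfolding M_def using abs_le_sum_abs[of "D T" v] by (auto simp: sum_nonneg)
  define l where "l = \<delta> / (M + 1)"
  have l: "0 < l" using \<delta> M by (simp add: l_def)
  \<comment> \<open>a small multiple of \<open>D\<close> is dominated by \<open>E\<close> at the terminal date\<close>
  have "l * D T v \<le> E T v" for v
  proof -
    have "l * D T v \<le> l * M" using M l by (simp add: mult_left_mono)
    also have "\<dots> \<le> \<delta>" unfolding l_def using \<delta> M by (simp add: field_simps)
    finally show ?thesis using \<delta>(2)[of v] by simp
  qed
  then have "\<alpha> T (scale_from T (\<lambda>_. l) D) w \<le> \<alpha> T E w"
    by (intro alpha_mono E scale_from_procs[OF D(1)]) (auto simp: scale_from_def)
  moreover have "\<alpha> T (scale_from T (\<lambda>_. l) D) = \<alpha> T D"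
    using alpha_scale[OF _ D(1)] l by simp
  ultimately show ?thesis using D(2) by simp
qed

lemma alpha_terminal_zero_neg:
  assumes D: "D \<in> PR" "\<alpha> T D w = 0"
  shows "D T w < 0"
proof (rule ccontr)
  assume "\<not> D T w < 0"
  define F where "F = (\<lambda>s v. if T \<le> s \<and> v \<in> cell T w then D s v else 0)"
  have F: "F \<in> PR" unfolding F_def by (rule patch_procs[OF _ D(1) zero_procs]) simp
  have "0 \<le> F T v" for v
    using \<open>\<not> D T w < 0\<close> measD[OF procsD[OF D(1)], of T v w] by (simp add: F_def)
  then have "\<alpha> T (padd F (ind_at T (\<lambda>_. c))) w = \<infinity>" if "0 < c" for c
    by (intro alpha_terminal_infty[OF cash_procs[OF _ F] that]) (auto simp: padd_def ind_at_def)
  then have "((\<lambda>c. \<alpha> T (padd F (ind_at T (\<lambda>_. c))) w) \<longlongrightarrow> \<infinity>) (at_right 0)"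
    by (intro tendsto_eventually) (auto intro: eventually_mono[OF eventually_at_right_less])
  then have "\<alpha> T F w = \<infinity>"
    using alpha_right_cont[OF _ F] tendsto_unique[OF trivial_limit_at_right_real] by blast
  moreover have "\<alpha> T F w = \<alpha> T D w"
    by (rule alpha_local[OF _ F D(1)]) (auto simp: F_def)
  ultimately show False using D(2) by simp
qed

lemma alpha_terminal_zero:
  assumes E: "E \<in> PR" and \<delta>: "0 < \<delta>" "\<And>v. E T v \<le> - \<delta>"
  shows "\<alpha> T E w = 0"
proof -
  obtain D where D: "D \<in> PR" "\<alpha> T D w = 0" using alpha_normalized[of T w] by blast
  have neg: "D T w < 0" by (rule alpha_terminal_zero_neg[OF D])
  define l where "l = \<delta> / - D T w"
  have l: "0 < l" "l * D T w = - \<delta>" using \<delta> neg by (auto simp: l_def divide_pos_neg)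
  \<comment> \<open>on the cell of \<open>w\<close>, a multiple of \<open>D\<close> dominates \<open>E\<close>; elsewhere nothing changes\<close>
  define G where "G = (\<lambda>s v. if T \<le> s \<and> v \<in> cell T w then scale_from T (\<lambda>_. l) D s v else E s v)"
  have G: "G \<in> PR" unfolding G_def by (rule patch_procs[OF _ scale_from_procs[OF D(1)] E]) simp_all
  have "\<alpha> T G w = \<alpha> T (scale_from T (\<lambda>_. l) D) w"
    by (rule alpha_local[OF _ G scale_from_procs[OF D(1)]]) (auto simp: G_def)
  also have "\<dots> = 0" using alpha_scale[of T D "\<lambda>_. l"] D l by simp
  finally have "\<alpha> T G w = 0" .
  moreover have "\<alpha> T E w \<le> \<alpha> T G w"
  proof (rule alpha_mono[OF _ G E])
    fix s v assume "T \<le> s" "s \<le> T"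
    then show "E s v \<le> G s v"
      using measD[OF procsD[OF D(1)], of T v w] l \<delta>(2)[of v] by (auto simp: G_def scale_from_def)
  qed simp
  ultimately show ?thesis using alpha_nonneg[OF _ E, of T w] by simp
qed

lemma alpha_cash_next:
  assumes "t < T" "D \<in> PR"
  shows "\<alpha> t (padd (padd D (ind_at (t+1) (\<lambda>_. c1))) (ind_at t (\<lambda>_. c0))) = \<alpha> t (padd D (ind_at t (\<lambda>_. c0 + c1)))"
proof -
  have "\<alpha> t (padd (padd D (ind_at t (\<lambda>_. c0))) (ind_at t (\<lambda>_. c1))) =
        \<alpha> t (padd (padd D (ind_at t (\<lambda>_. c0))) (ind_at (t+1) (\<lambda>_. c1)))"
    using assms by (intro alpha_cash_delay cash_procs) auto
  then show ?thesis by (simp add: padd_ind_at_add padd_ind_at_swap)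
qed

lemma alpha_cash_zero:
  assumes "t \<le> T" "D \<in> PR"
  shows "\<exists>c. \<forall>w. \<alpha> t (padd D (ind_at t (\<lambda>_. c))) w = 0"
  using assms
proof (induction t arbitrary: D rule: inc_induct)
  case base
  define M where "M = (\<Sum>v\<in>UNIV. \<bar>D T v\<bar>)"
  have "\<alpha> T (padd D (ind_at T (\<lambda>_. - M - 1))) w = 0" for w
  proof (rule alpha_terminal_zero[OF cash_procs[OF order_refl base], where \<delta>=1])
    fix v show "padd D (ind_at T (\<lambda>_. - M - 1)) T v \<le> - 1"
      using abs_le_sum_abs[of "D T" v] by (simp add: padd_def ind_at_def M_def abs_le_iff)
  qed simp
  then show ?case by blast
next
  case (step t)
  obtain c1 where c1: "\<And>w. \<alpha> (t+1) (padd D (ind_at (t+1) (\<lambda>_. c1))) w = 0"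
    using step.IH[OF step.prems] by auto
  define c0 where "c0 = (\<Sum>v\<in>UNIV. \<bar>D t v\<bar>)"
  define E where "E = padd (padd D (ind_at (t+1) (\<lambda>_. c1))) (ind_at t (\<lambda>_. - c0))"
  have E: "E \<in> PR" unfolding E_def using cash_procs step by simp
  have "\<alpha> (t+1) E v = \<alpha> (t+1) (padd D (ind_at (t+1) (\<lambda>_. c1))) v" for v
    using step by (intro alpha_local[OF _ E cash_procs]) (auto simp: E_def padd_def ind_at_def)
  then have E1: "\<alpha> (t+1) E v = 0" for v using c1 by simp
  have "\<alpha> t E w \<le> 0" for w
  proof -
    have "ereal 0 \<le> \<alpha> t (\<lambda>_ _. 0) w \<and> \<alpha> t E w \<le> ereal 0"
    proof (rule alpha_step[OF _ zero_procs E])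
      fix v show "E t v \<le> 0"
        using abs_le_sum_abs[of "D t" v] by (simp add: E_def padd_def ind_at_def c0_def abs_le_iff)
      show "ereal 0 \<le> \<alpha> (t+1) (\<lambda>_ _. 0) v"
        using alpha_nonneg[OF _ zero_procs] step by (simp add: zero_ereal_def[symmetric])
      show "\<alpha> (t+1) E v \<le> ereal 0" using E1 by simp
    qed (use step in simp_all)
    then show ?thesis by (simp add: zero_ereal_def)
  qed
  then have "\<alpha> t E w = 0" for w using alpha_nonneg[OF _ E, of t w] step by (simp add: antisym)
  then show ?case
    using alpha_cash_next[of t D c1 "- c0"] step unfolding E_def by auto
qed

lemma alpha_cash_infty:
  assumes "t \<le> T" "D \<in> PR"
  shows "\<exists>c. \<forall>w. \<alpha> t (padd D (ind_at t (\<lambda>_. c))) w = \<infinity>"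
  using assms
proof (induction t arbitrary: D rule: inc_induct)
  case base
  define M where "M = (\<Sum>v\<in>UNIV. \<bar>D T v\<bar>)"
  have "\<alpha> T (padd D (ind_at T (\<lambda>_. M + 1))) w = \<infinity>" for w
  proof (rule alpha_terminal_infty[OF cash_procs[OF order_refl base], where \<delta>=1])
    fix v show "1 \<le> padd D (ind_at T (\<lambda>_. M + 1)) T v"
      using abs_le_sum_abs[of "D T" v] by (simp add: padd_def ind_at_def M_def abs_le_iff)
  qed simp
  then show ?case by blast
next
  case (step t)
  obtain c1 where c1: "\<And>w. \<alpha> (t+1) (padd D (ind_at (t+1) (\<lambda>_. c1))) w = \<infinity>"
    using step.IH[OF step.prems] by auto
  obtain c2 where c2: "\<And>w. \<alpha> (t+1) (padd (\<lambda>_ _. 0) (ind_at (t+1) (\<lambda>_. c2))) w = 0"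
    using alpha_cash_zero[OF _ zero_procs, of "t+1"] step by auto
  define Z :: "'w proc" where "Z = padd (\<lambda>_ _. 0) (ind_at (t+1) (\<lambda>_. c2))"
  have Z: "Z \<in> PR" "\<And>v. \<alpha> (t+1) Z v = 0"
    unfolding Z_def using cash_procs[OF _ zero_procs] c2 step by auto
  define c0 where "c0 = (\<Sum>v\<in>UNIV. \<bar>D t v\<bar>)"
  define E where "E = padd (padd D (ind_at (t+1) (\<lambda>_. c1))) (ind_at t (\<lambda>_. c0))"
  have E: "E \<in> PR" unfolding E_def using cash_procs step by simp
  have "\<alpha> (t+1) E v = \<alpha> (t+1) (padd D (ind_at (t+1) (\<lambda>_. c1))) v" for v
    using step by (intro alpha_local[OF _ E cash_procs]) (auto simp: E_def padd_def ind_at_def)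
  then have E1: "\<alpha> (t+1) E v = \<infinity>" for v using c1 by simp
  have "ereal M \<le> \<alpha> t E w" if "0 \<le> M" for M w
  proof -
    have "ereal M \<le> \<alpha> t E w \<and> \<alpha> t Z w \<le> ereal M"
    proof (rule alpha_step[OF _ E Z(1)])
      fix v show "0 \<le> E t v"
        using abs_le_sum_abs[of "D t" v] by (simp add: E_def padd_def ind_at_def c0_def abs_le_iff)
      show "Z t v \<le> 0" by (simp add: Z_def padd_def ind_at_def)
      show "\<alpha> (t+1) Z v \<le> ereal M" using Z(2) that by simp
    qed (use step E1 in simp_all)
    then show ?thesis by simp
  qed
  then have "\<alpha> t E w = \<infinity>" for w
    by (intro ereal_top) (meson ereal_less_eq(3) max.cobounded1 max.cobounded2 order_trans)
  then show ?case
    using alpha_cash_next[of t D c1 c0] step unfolding E_def by auto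
qed

definition acc_cash :: "real \<Rightarrow> nat \<Rightarrow> 'w proc \<Rightarrow> 'w \<Rightarrow> real set" where
  "acc_cash x t D w = {c. ereal x \<le> \<alpha> t (padd D (ind_at t (\<lambda>_. c))) w}"

definition risk :: "real \<Rightarrow> nat \<Rightarrow> 'w proc \<Rightarrow> 'w \<Rightarrow> real" where
  "risk x t D w = real_of_ereal (rho \<alpha> x t D w)"

lemma rho_eq_Inf_acc_cash: "rho \<alpha> x t D w = Inf (ereal ` acc_cash x t D w)"
  unfolding rho_def acc_cash_def by (simp add: image_def) metis

lemma acc_cash_upclosed:
  assumes "t \<le> T" "D \<in> PR" "c \<in> acc_cash x t D w" "c \<le> c'"
  shows "c' \<in> acc_cash x t D w"
proof -
  have "\<alpha> t (padd D (ind_at t (\<lambda>_. c))) w \<le> \<alpha> t (padd D (ind_at t (\<lambda>_. c'))) w"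
    using assms by (intro alpha_mono cash_procs) (auto simp: padd_def ind_at_def)
  then show ?thesis using assms(3) unfolding acc_cash_def by auto
qed

lemma rho_eqI:
  assumes "\<And>c. r < c \<Longrightarrow> c \<in> acc_cash x t D w" "\<And>c. c < r \<Longrightarrow> c \<notin> acc_cash x t D w"
  shows "rho \<alpha> x t D w = ereal r"
proof (rule antisym)
  show "rho \<alpha> x t D w \<le> ereal r" unfolding rho_eq_Inf_acc_cash Inf_le_iff
  proof (intro allI impI)
    fix y assume "ereal r < y"
    then obtain z where "ereal r < ereal z" "ereal z < y" using ereal_dense2 by blast
    then show "\<exists>a\<in>ereal ` acc_cash x t D w. a < y" using assms(1) by force
  qed
  show "ereal r \<le> rho \<alpha> x t D w" unfolding rho_eq_Inf_acc_cash
    by (rule Inf_greatest) (use assms(2) in force)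
qed

text \<open>For \<open>x > 0\<close> the index can be pushed to \<open>\<infinity>\<close> and to \<open>0\<close> by cash, so \<open>\<rho>\<^sup>x\<close> is finite.\<close>

lemma rho_threshold:
  assumes "0 < x" "t \<le> T" "D \<in> PR"
  obtains r where "rho \<alpha> x t D w = ereal r"
    and "\<And>c. r < c \<Longrightarrow> c \<in> acc_cash x t D w" and "\<And>c. c < r \<Longrightarrow> c \<notin> acc_cash x t D w"
proof -
  let ?S = "acc_cash x t D w"
  obtain c1 c2 where "\<forall>w. \<alpha> t (padd D (ind_at t (\<lambda>_. c1))) w = \<infinity>"
      and "\<forall>w. \<alpha> t (padd D (ind_at t (\<lambda>_. c2))) w = 0"
    using alpha_cash_infty[OF assms(2,3)] alpha_cash_zero[OF assms(2,3)] by blast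
  then have "c1 \<in> ?S" "c2 \<notin> ?S" using assms(1) by (auto simp: acc_cash_def)
  then have "c2 \<le> c" if "c \<in> ?S" for c using acc_cash_upclosed[OF assms(2,3) that, of c2] by force
  then have bdd: "bdd_below ?S" by (auto simp: bdd_below_def)
  have "c \<in> ?S" if "Inf ?S < c" for c
    using cInf_less_iff[of ?S c] \<open>c1 \<in> ?S\<close> bdd that acc_cash_upclosed[OF assms(2,3)]
    by (metis empty_iff less_imp_le)
  moreover have "c \<notin> ?S" if "c < Inf ?S" for c
    using cInf_lower[OF _ bdd, of c] that by fastforce
  ultimately show ?thesis using that rho_eqI by blast
qed

lemma rho_eq_risk: "0 < x \<Longrightarrow> t \<le> T \<Longrightarrow> D \<in> PR \<Longrightarrow> rho \<alpha> x t D w = ereal (risk x t D w)"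
  by (rule rho_threshold[of x t D w]) (simp_all add: risk_def)

lemma risk_threshold:
  assumes "0 < x" "t \<le> T" "D \<in> PR"
  shows "risk x t D w < c \<Longrightarrow> c \<in> acc_cash x t D w" and "c < risk x t D w \<Longrightarrow> c \<notin> acc_cash x t D w"
  by (rule rho_threshold[OF assms, of w]; simp add: risk_def)+

lemma risk_eqI:
  assumes "\<And>c. r < c \<Longrightarrow> c \<in> acc_cash x t D w" "\<And>c. c < r \<Longrightarrow> c \<notin> acc_cash x t D w"
  shows "risk x t D w = r"
  unfolding risk_def using rho_eqI[OF assms] by simp

lemma risk_local:
  assumes "t \<le> T" "D \<in> PR" "D' \<in> PR"
    and "\<And>s v. t \<le> s \<Longrightarrow> s \<le> T \<Longrightarrow> v \<in> cell t w \<Longrightarrow> D s v = D' s v"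
  shows "risk x t D w = risk x t D' w"
proof -
  have "\<alpha> t (padd D (ind_at t (\<lambda>_. c))) w = \<alpha> t (padd D' (ind_at t (\<lambda>_. c))) w" for c
    using assms by (intro alpha_local cash_procs) (auto simp: padd_def)
  then show ?thesis unfolding risk_def rho_eq_Inf_acc_cash acc_cash_def by simp
qed

lemma meas_risk:
  assumes "t \<le> T" "D \<in> PR"
  shows "meas cell t (risk x t D)"
  unfolding meas_def
proof (intro allI impI)
  fix w v assume "v \<in> cell t w"
  then have "acc_cash x t D v = acc_cash x t D w"
    using alpha_meas[OF assms(1) cash_procs[OF assms]] by (simp add: acc_cash_def)
  then show "risk x t D v = risk x t D w" by (simp add: risk_def rho_eq_Inf_acc_cash)
qed

lemma risk_cash:
  assumes x: "0 < x" and t: "t \<le> s" "s \<le> T" and D: "D \<in> PR" and m: "meas cell t m"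
  shows "risk x t (padd D (ind_at s m)) w = risk x t D w - m w"
proof -
  have tT: "t \<le> T" using t by simp
  have acc: "c \<in> acc_cash x t (padd D (ind_at s m)) w \<longleftrightarrow> c + m w \<in> acc_cash x t D w" for c
  proof -
    have B: "padd D (ind_at t (\<lambda>_. c)) \<in> PR" using cash_procs[OF tT D] .
    have "\<alpha> t (padd (padd D (ind_at s m)) (ind_at t (\<lambda>_. c))) w =
          \<alpha> t (padd (padd D (ind_at t (\<lambda>_. c))) (ind_at s m)) w" by (simp add: padd_ind_at_swap)
    also have "\<dots> = \<alpha> t (padd (padd D (ind_at t (\<lambda>_. c))) (ind_at t m)) w"
      using alpha_cash_delay[OF tT B m t] by simp
    also have "\<dots> = \<alpha> t (padd D (ind_at t (\<lambda>_. c + m w))) w"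
      using measD[OF m] tT B m
      by (intro alpha_local padd_procs ind_at_procs cash_procs D) (auto simp: padd_def ind_at_def)
    finally show ?thesis unfolding acc_cash_def by simp
  qed
  show ?thesis
    using risk_threshold[OF x tT D, where w=w] by (intro risk_eqI) (simp_all add: acc)
qed

lemma risk_mono:
  assumes x: "0 < x" and t: "t \<le> T" and D: "D \<in> PR" "D' \<in> PR"
    and le: "\<And>s v. t \<le> s \<Longrightarrow> s \<le> T \<Longrightarrow> D' s v \<le> D s v"
  shows "risk x t D w \<le> risk x t D' w"
proof (rule ccontr)
  assume "\<not> ?thesis"
  then have "risk x t D' w < risk x t D w" by simp
  then obtain c where c: "risk x t D' w < c" "c < risk x t D w" using dense by blast
  have "\<alpha> t (padd D' (ind_at t (\<lambda>_. c))) w \<le> \<alpha> t (padd D (ind_at t (\<lambda>_. c))) w"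
    using t D le by (intro alpha_mono cash_procs) (auto simp: padd_def ind_at_def)
  then show False
    using risk_threshold(1)[OF x t D(2) c(1)] risk_threshold(2)[OF x t D(1) c(2)]
    by (auto simp: acc_cash_def)
qed

lemma risk_scale:
  assumes x: "0 < x" and t: "t \<le> T" and D: "D \<in> PR" and l: "meas cell t l" "\<And>v. 0 < l v"
  shows "risk x t (scale_from t l D) w = l w * risk x t D w"
proof -
  have lw: "0 < l w" using l(2) by simp
  have acc: "c \<in> acc_cash x t (scale_from t l D) w \<longleftrightarrow> c / l w \<in> acc_cash x t D w" for c
  proof -
    have P: "padd D (ind_at t (\<lambda>_. c / l w)) \<in> PR" using cash_procs[OF t D] .
    have "\<alpha> t (padd (scale_from t l D) (ind_at t (\<lambda>_. c))) w =
          \<alpha> t (scale_from t l (padd D (ind_at t (\<lambda>_. c / l w)))) w"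
      using measD[OF l(1)] lw t
      by (intro alpha_local cash_procs scale_from_procs D P l(1))
         (auto simp: padd_def ind_at_def scale_from_def field_simps)
    also have "\<dots> = \<alpha> t (padd D (ind_at t (\<lambda>_. c / l w))) w"
      using alpha_scale[OF t P l] by simp
    finally show ?thesis unfolding acc_cash_def by simp
  qed
  show ?thesis
    using risk_threshold[OF x t D, where w=w] lw by (intro risk_eqI) (simp_all add: acc field_simps)
qed

lemma risk_zero:
  assumes "0 < x" "t \<le> T"
  shows "risk x t (\<lambda>_ _. 0) w = 0"
proof -
  have "scale_from t (\<lambda>_. 2) (\<lambda>_ _. 0) = ((\<lambda>_ _. 0) :: 'w proc)" by (simp add: scale_from_def fun_eq_iff)
  then have "risk x t (\<lambda>_ _. 0) w = 2 * risk x t (\<lambda>_ _. 0) w"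
    using risk_scale[OF assms zero_procs, of "\<lambda>_. 2" w] by simp
  then show ?thesis by simp
qed

lemma risk_terminal:
  assumes x: "0 < x" and D: "D \<in> PR"
  shows "risk x T D w = - D T w"
proof -
  have DT: "meas cell T (D T)" using procsD[OF D] by simp
  have "risk x T D w = risk x T (padd (\<lambda>_ _. 0) (ind_at T (D T))) w"
    by (rule risk_local[OF _ D padd_procs[OF zero_procs ind_at_procs[OF _ DT]]])
       (auto simp: padd_def ind_at_def)
  also have "\<dots> = - D T w"
    using risk_cash[OF x order_refl order_refl zero_procs DT] risk_zero[OF x] by simp
  finally show ?thesis .
qed

lemma acceptable_iff_risk_nonpos:
  assumes x: "0 < x" and t: "t \<le> T" and D: "D \<in> PR"
  shows "ereal x \<le> \<alpha> t D w \<longleftrightarrow> risk x t D w \<le> 0"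
proof
  assume "ereal x \<le> \<alpha> t D w"
  then show "risk x t D w \<le> 0"
    using risk_threshold(2)[OF x t D, where c=0 and w=w] by (force simp: acc_cash_def)
next
  assume "risk x t D w \<le> 0"
  then have "\<forall>\<^sub>F c in at_right 0. ereal x \<le> \<alpha> t (padd D (ind_at t (\<lambda>_. c))) w"
    using risk_threshold(1)[OF x t D]
    by (auto simp: acc_cash_def intro: eventually_mono[OF eventually_at_right_less])
  then show "ereal x \<le> \<alpha> t D w"
    by (rule tendsto_lowerbound[OF alpha_right_cont[OF t D]]) simp
qed

lemma risk_recursive:
  assumes x: "0 < x" and stc: "strongly_tc cell T (rho \<alpha> x)" and s: "s < T" and D: "D \<in> PR"
  shows "risk x s D w = risk x s (ind_at (s+1) (\<lambda>v. - risk x (s+1) D v)) w - D s w"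
proof -
  define m where "m = (\<lambda>v. - risk x (s+1) D v)"
  have m: "meas cell (s+1) m" unfolding m_def using meas_uminus[OF meas_risk[OF _ D]] s by simp
  have I: "ind_at (s+1) m \<in> PR" using ind_at_procs[OF _ m] s by simp
  have Ds: "meas cell s (D s)" using procsD[OF D] s by simp
  define E where "E = padd (ind_at (s+1) m) (ind_at s (D s))"
  have E: "E \<in> PR" unfolding E_def using padd_procs[OF I ind_at_procs[OF _ Ds]] s by simp
  have "risk x (s+1) E v = risk x (s+1) D v" for v
  proof -
    have "risk x (s+1) E v = risk x (s+1) (padd (\<lambda>_ _. 0) (ind_at (s+1) m)) v"
      using s by (intro risk_local[OF _ E padd_procs[OF zero_procs I]]) (auto simp: E_def padd_def ind_at_def)
    also have "\<dots> = risk x (s+1) D v"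
      using risk_cash[OF x order_refl _ zero_procs m] risk_zero[OF x] s by (simp add: m_def)
    finally show ?thesis .
  qed
  then have "rho \<alpha> x (s+1) D = rho \<alpha> x (s+1) E"
    using rho_eq_risk[OF x _ D] rho_eq_risk[OF x _ E] s by auto
  moreover have "D s w' = E s w'" for w' by (simp add: E_def padd_def ind_at_def)
  ultimately have "rho \<alpha> x s D = rho \<alpha> x s E"
    using stc s D E unfolding strongly_tc_def by blast
  then have "risk x s D w = risk x s E w" unfolding risk_def by simp
  also have "\<dots> = risk x s (ind_at (s+1) m) w - D s w"
    unfolding E_def using risk_cash[OF x order_refl _ I Ds] s by simp
  finally show ?thesis by (simp add: m_def)
qed

lemma risk_ge_one_step:
  assumes x: "0 < x" and stc: "strongly_tc cell T (rho \<alpha> x)" and s: "s < T" and D: "D \<in> PR"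
    and later: "\<And>v. - D (s+1) v \<le> risk x (s+1) D v"
  shows "risk x s (ind_at (s+1) (D (s+1))) w \<le> risk x s D w + D s w"
proof -
  have "risk x s (ind_at (s+1) (D (s+1))) w \<le> risk x s (ind_at (s+1) (\<lambda>v. - risk x (s+1) D v)) w"
    using s later meas_uminus[OF meas_risk[OF _ D]] procsD[OF D]
    by (intro risk_mono[OF x] ind_at_procs) (auto simp: ind_at_def minus_le_iff le_minus_iff)
  then show ?thesis using risk_recursive[OF x stc s D] by simp
qed

lemma risk_le_one_step:
  assumes x: "0 < x" and stc: "strongly_tc cell T (rho \<alpha> x)" and s: "s < T" and D: "D \<in> PR"
    and later: "\<And>v. risk x (s+1) D v \<le> - D (s+1) v"
  shows "risk x s D w + D s w \<le> risk x s (ind_at (s+1) (D (s+1))) w"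
proof -
  have "risk x s (ind_at (s+1) (\<lambda>v. - risk x (s+1) D v)) w \<le> risk x s (ind_at (s+1) (D (s+1))) w"
    using s later meas_uminus[OF meas_risk[OF _ D]] procsD[OF D]
    by (intro risk_mono[OF x] ind_at_procs) (auto simp: ind_at_def minus_le_iff le_minus_iff)
  then show ?thesis using risk_recursive[OF x stc s D] by simp
qed

end

section \<open>Long-only strategies\<close>

lemma sum_mult_pos:
  fixes f g :: "'a::finite \<Rightarrow> real"
  assumes "\<And>i. 0 \<le> f i" "0 < sum f UNIV" "\<And>i. 0 < g i"
  shows "0 < (\<Sum>i\<in>UNIV. g i * f i)"
proof -
  obtain j where "0 < f j"
    using assms(2) sum_nonpos[of UNIV f] by (meson not_le)
  then show ?thesis
    by (intro sum_pos2[of UNIV j]) (use assms in \<open>auto intro: mult_nonneg_nonneg less_imp_le\<close>)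
qed

lemma wealth_start: "wealth R t V h t = V"
  by (simp add: wealth_def fun_eq_iff)

lemma wealth_Suc: "t \<le> s \<Longrightarrow> wealth R t V h (Suc s) w = (\<Sum>i\<in>UNIV. R (Suc s) w i * h s w i)"
  by (simp add: wealth_def)

definition simplex :: "('d::finite \<Rightarrow> real) \<Rightarrow> bool" where
  "simplex c \<longleftrightarrow> (\<forall>i. 0 \<le> c i) \<and> (\<Sum>i\<in>UNIV. c i) = 1"

definition weights :: "(nat \<Rightarrow> 'w \<Rightarrow> 'd::finite \<Rightarrow> real) \<Rightarrow> nat \<Rightarrow> ('w \<Rightarrow> real) \<Rightarrow>
    (nat \<Rightarrow> 'w \<Rightarrow> 'd \<Rightarrow> real) \<Rightarrow> nat \<Rightarrow> 'w \<Rightarrow> 'd \<Rightarrow> real" where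
  "weights R t V h s w i = h s w i / wealth R t V h s w"

text \<open>The constantly rebalanced strategy holding the fractions \<open>c\<close> of current wealth.\<close>

definition fixed_mix :: "(nat \<Rightarrow> 'w \<Rightarrow> 'd::finite \<Rightarrow> real) \<Rightarrow> nat \<Rightarrow> ('w \<Rightarrow> real) \<Rightarrow> ('d \<Rightarrow> real) \<Rightarrow>
    nat \<Rightarrow> 'w \<Rightarrow> 'd \<Rightarrow> real" where
  "fixed_mix R t V c s w i = V w * (\<Prod>r\<in>{t<..s}. \<Sum>j\<in>UNIV. R r w j * c j) * c i"

lemma wealth_fixed_mix:
  "wealth R t V (fixed_mix R t V c) s w = V w * (\<Prod>r\<in>{t<..s}. \<Sum>j\<in>UNIV. R r w j * c j)"
proof (cases "s \<le> t")
  case False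
  then obtain n where n: "s = Suc n" "t \<le> n" by (cases s) auto
  have "wealth R t V (fixed_mix R t V c) s w =
      (\<Sum>i\<in>UNIV. (V w * (\<Prod>r\<in>{t<..n}. \<Sum>j\<in>UNIV. R r w j * c j)) * (R (Suc n) w i * c i))"
    using n by (simp add: wealth_Suc fixed_mix_def mult_ac)
  also have "\<dots> = V w * (\<Prod>r\<in>{t<..n}. \<Sum>j\<in>UNIV. R r w j * c j) * (\<Sum>j\<in>UNIV. R (Suc n) w j * c j)"
    by (rule sum_distrib_left[symmetric])
  also have "{t<..s} = insert (Suc n) {t<..n}" using n by auto
  then have "V w * (\<Prod>r\<in>{t<..n}. \<Sum>j\<in>UNIV. R r w j * c j) * (\<Sum>j\<in>UNIV. R (Suc n) w j * c j) =
      V w * (\<Prod>r\<in>{t<..s}. \<Sum>j\<in>UNIV. R r w j * c j)" by (simp add: mult_ac)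
  finally show ?thesis .
qed (simp add: wealth_def)

locale market = acceptability_index R T \<alpha>
  for R :: "nat \<Rightarrow> 'w::finite \<Rightarrow> 'd::finite \<Rightarrow> real" and T \<alpha> +
  assumes returns_pos: "\<forall>s\<in>{1..T}. \<forall>w i. 0 < R s w i"
begin

abbreviation "PF t V \<equiv> portfolios (ret_cell R) R T t V"

lemma portfoliosD:
  assumes "h \<in> PF t V" "t \<le> s" "s < T"
  shows "meas cell s (\<lambda>w. h s w i)" "0 \<le> h s w i" "(\<Sum>i\<in>UNIV. h s w i) = wealth R t V h s w"
  using assms unfolding portfolios_def by blast+

lemma wealth_pos:
  assumes h: "h \<in> PF t V" and V: "\<And>u. 0 < V u" and s: "t \<le> s" "s \<le> T"
  shows "0 < wealth R t V h s w"
  using s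
proof (induction s rule: dec_induct)
  case (step n)
  then have "0 < (\<Sum>i\<in>UNIV. R (Suc n) w i * h n w i)"
    using returns_pos portfoliosD[OF h step(1)] by (intro sum_mult_pos) auto
  then show ?case by (simp add: wealth_Suc step(1))
qed (simp add: wealth_start V)

lemma meas_wealth:
  assumes h: "h \<in> PF t V" and V: "meas cell t V" and s: "t \<le> s" "s \<le> T"
  shows "meas cell s (wealth R t V h s)"
proof (cases "s = t")
  case False
  then obtain n where n: "s = Suc n" "t \<le> n" "n < T" using s by (cases s) auto
  show ?thesis unfolding meas_def
  proof (intro allI impI)
    fix u u' assume u: "u' \<in> cell s u"
    have "R (Suc n) u' = R (Suc n) u" using u n by (simp add: ret_cell_def)
    moreover have "h n u' i = h n u i" for i
      using measD[OF portfoliosD(1)[OF h n(2,3)] ret_cell_antimono[OF _ u]] n by simp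
    ultimately show "wealth R t V h s u' = wealth R t V h s u"
      using n by (simp add: wealth_Suc)
  qed
qed (use V in \<open>simp add: wealth_start\<close>)

lemma divs_procs:
  assumes h: "h \<in> PF t V" and V: "meas cell t V"
  shows "divs R T t V h \<in> PR"
proof (rule procsI)
  fix r assume r: "r \<le> T"
  show "meas cell r (divs R T t V h r)"
  proof (cases "t < r")
    case True
    then have "meas cell r (wealth R t V h r)" "meas cell r (wealth R t V h (r - 1))"
      using meas_wealth[OF h V] meas_mono[OF meas_wealth[OF h V, of "r - 1"]] r by auto
    then show ?thesis using True r unfolding meas_def divs_def by simp
  qed (simp add: divs_def meas_def)
qed (simp add: divs_def)

lemma weights_simplex:
  assumes h: "h \<in> PF t V" and V: "\<And>u. 0 < V u" and s: "t \<le> s" "s < T"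
  shows "simplex (weights R t V h s w)"
  using wealth_pos[OF h V, of s w] portfoliosD[OF h s] s
  by (simp add: simplex_def weights_def sum_divide_distrib[symmetric])

lemma fixed_mix_portfolio:
  assumes c: "simplex c" and V: "meas cell t V" "\<And>u. 0 < V u"
  shows "fixed_mix R t V c \<in> PF t V"
  unfolding portfolios_def
proof (intro CollectI allI impI conjI)
  fix s i w assume s: "t \<le> s \<and> s < T"
  have growth: "0 < (\<Prod>r\<in>{t<..s}. \<Sum>j\<in>UNIV. R r w j * c j)"
    using c returns_pos s by (intro prod_pos sum_mult_pos) (auto simp: simplex_def)
  show "meas cell s (\<lambda>w. fixed_mix R t V c s w i)" unfolding meas_def
  proof (intro allI impI)
    fix u u' assume u: "u' \<in> cell s u"
    have "V u' = V u" using measD[OF V(1) ret_cell_antimono[OF _ u]] s by simp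
    moreover have "(\<Prod>r\<in>{t<..s}. \<Sum>j\<in>UNIV. R r u' j * c j) = (\<Prod>r\<in>{t<..s}. \<Sum>j\<in>UNIV. R r u j * c j)"
      using u by (intro prod.cong) (auto simp: ret_cell_def)
    ultimately show "fixed_mix R t V c s u' i = fixed_mix R t V c s u i" by (simp add: fixed_mix_def)
  qed
  show "0 \<le> fixed_mix R t V c s w i"
    using V(2)[of w] growth c unfolding fixed_mix_def simplex_def by simp
  show "(\<Sum>i\<in>UNIV. fixed_mix R t V c s w i) = wealth R t V (fixed_mix R t V c) s w"
    using c by (simp add: fixed_mix_def wealth_fixed_mix simplex_def sum_distrib_left[symmetric])
qed

lemma weights_fixed_mix:
  assumes c: "simplex c" and V: "\<And>u. 0 < V u" and s: "s < T"
  shows "weights R t V (fixed_mix R t V c) s w = c"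
proof -
  define P where "P = V w * (\<Prod>r\<in>{t<..s}. \<Sum>j\<in>UNIV. R r w j * c j)"
  have "0 < P"
    unfolding P_def using c returns_pos s V[of w]
    by (intro mult_pos_pos prod_pos sum_mult_pos) (auto simp: simplex_def)
  moreover have "wealth R t V (fixed_mix R t V c) s w = P" "fixed_mix R t V c s w i = P * c i" for i
    by (simp_all add: P_def wealth_fixed_mix fixed_mix_def)
  ultimately show ?thesis by (simp add: fun_eq_iff weights_def)
qed

end

section \<open>Identical one-step risk under i.i.d. returns\<close>

lemma prob_eq_sum_fibres:
  fixes P :: "'w::finite \<Rightarrow> real" and g :: "'w \<Rightarrow> 'b"
  assumes "finite F" "g ` {u. g u \<in> B} \<subseteq> F" "F \<subseteq> B"
  shows "prob P {u. g u \<in> B} = (\<Sum>a\<in>F. prob P {u. g u = a})"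
proof -
  have "sum P {u. g u \<in> B} = (\<Sum>a\<in>F. sum P {x. x \<in> {u. g u \<in> B} \<and> g x = a})"
    by (rule sum.group[symmetric]) (use assms in auto)
  also have "\<dots> = (\<Sum>a\<in>F. sum P {u. g u = a})"
    using assms(3) by (intro sum.cong refl arg_cong[where f="sum P"]) auto
  finally show ?thesis unfolding prob_def .
qed

lemma prob_iid_rectangle:
  fixes P :: "'w::finite \<Rightarrow> real" and R :: "nat \<Rightarrow> 'w \<Rightarrow> 'd \<Rightarrow> real"
  assumes iid: "iid P R T"
  shows "prob P {u. \<forall>r\<in>{1..T}. R r u \<in> B r} = (\<Prod>r\<in>{1..T}. prob P {u. R r u \<in> B r})"
proof -
  let ?I = "{1..T}"
  define A where "A r = B r \<inter> range (R r)" for r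
  have fin: "finite (A r)" for r unfolding A_def by simp
  \<comment> \<open>group the sample points by the path of returns they produce\<close>
  define f where "f u = restrict (\<lambda>r. R r u) ?I" for u
  have f_in: "f u \<in> PiE ?I A \<longleftrightarrow> (\<forall>r\<in>?I. R r u \<in> B r)" for u
    by (simp add: f_def A_def PiE_iff)
  have f_eq: "{u. f u = v} = {u. \<forall>r\<in>?I. R r u = v r}" if v: "v \<in> PiE ?I A" for v
  proof -
    have "f u = v \<longleftrightarrow> (\<forall>r\<in>?I. R r u = v r)" for u
    proof
      assume "f u = v"
      then show "\<forall>r\<in>?I. R r u = v r" unfolding f_def by (metis restrict_apply')
    next
      assume "\<forall>r\<in>?I. R r u = v r"
      then show "f u = v" using v unfolding f_def by (auto simp: PiE_iff extensional_def)
    qed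
    then show ?thesis by blast
  qed
  have "prob P {u. f u \<in> PiE ?I A} = (\<Sum>v\<in>PiE ?I A. prob P {u. f u = v})"
    by (rule prob_eq_sum_fibres) (auto simp: fin finite_PiE)
  also have "\<dots> = (\<Sum>v\<in>PiE ?I A. \<Prod>r\<in>?I. prob P {u. R r u = v r})"
    using iid[unfolded iid_def, THEN conjunct2] f_eq by (intro sum.cong) simp_all
  also have "\<dots> = (\<Prod>r\<in>?I. \<Sum>a\<in>A r. prob P {u. R r u = a})"
    by (rule prod_sum_PiE[symmetric]) (simp_all add: fin)
  also have "\<dots> = (\<Prod>r\<in>?I. prob P {u. R r u \<in> B r})"
    by (intro prod.cong refl prob_eq_sum_fibres[symmetric]) (auto simp: fin A_def)
  finally show ?thesis using f_in by simp
qed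

lemma prob_iid_marginal:
  fixes P :: "'w::finite \<Rightarrow> real" and R :: "nat \<Rightarrow> 'w \<Rightarrow> 'd \<Rightarrow> real"
  assumes iid: "iid P R T" and r: "r \<in> {1..T}"
  shows "prob P {u. R r u \<in> B} = prob P {u. R 1 u \<in> B}"
proof -
  define F where "F = B \<inter> (range (R r) \<union> range (R 1))"
  have fF: "finite F" unfolding F_def by simp
  have "prob P {u. R r u \<in> B} = (\<Sum>a\<in>F. prob P {u. R r u = a})"
    by (rule prob_eq_sum_fibres[OF fF]) (auto simp: F_def)
  also have "\<dots> = (\<Sum>a\<in>F. prob P {u. R 1 u = a})"
  proof (intro sum.cong refl)
    fix a
    have "1 \<in> {1..T}" using r by simp
    then show "prob P {u. R r u = a} = prob P {u. R 1 u = a}"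
      using iid[unfolded iid_def, THEN conjunct1] r by blast
  qed
  also have "\<dots> = prob P {u. R 1 u \<in> B}"
    by (rule prob_eq_sum_fibres[OF fF, symmetric]) (auto simp: F_def)
  finally show ?thesis .
qed

lemma prob_ret_cell_inter_next:
  fixes P :: "'w::finite \<Rightarrow> real" and R :: "nat \<Rightarrow> 'w \<Rightarrow> 'd \<Rightarrow> real"
  assumes iid: "iid P R T" and P1: "(\<Sum>w\<in>UNIV. P w) = 1" and s: "s < T"
  shows "prob P (ret_cell R s w \<inter> {u. R (s+1) u \<in> B}) = prob P (ret_cell R s w) * prob P {u. R 1 u \<in> B}"
proof -
  let ?I = "{1..T}"
  define Bs where "Bs = (\<lambda>B' r. if r \<le> s then {R r w} else if r = s+1 then B' else UNIV)"
  have rect: "ret_cell R s w \<inter> {u. R (s+1) u \<in> B'} = {u. \<forall>r\<in>?I. R r u \<in> Bs B' r}" for B'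
  proof -
    have "u \<in> ret_cell R s w \<inter> {u. R (s+1) u \<in> B'} \<longleftrightarrow> (\<forall>r\<in>?I. R r u \<in> Bs B' r)" for u
    proof
      assume "u \<in> ret_cell R s w \<inter> {u. R (s+1) u \<in> B'}"
      then show "\<forall>r\<in>?I. R r u \<in> Bs B' r" unfolding Bs_def ret_cell_def by auto
    next
      assume a: "\<forall>r\<in>?I. R r u \<in> Bs B' r"
      have "R r u = R r w" if "r \<in> {1..s}" for r using a[rule_format, of r] that s unfolding Bs_def by auto
      moreover have "R (s+1) u \<in> B'" using a[rule_format, of "s+1"] s unfolding Bs_def by auto
      ultimately show "u \<in> ret_cell R s w \<inter> {u. R (s+1) u \<in> B'}" unfolding ret_cell_def by auto
    qed
    then show ?thesis by blast
  qed
  define g where "g = (\<lambda>B' r. prob P {u. R r u \<in> Bs B' r})"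
  have pU: "prob P {u. R r u \<in> UNIV} = 1" for r using P1 unfolding prob_def by simp
  have sI: "s+1 \<in> ?I" using s by simp
  have split: "(\<Prod>r\<in>?I. g B' r) = g B' (s+1) * (\<Prod>r\<in>?I-{s+1}. g UNIV r)" for B'
  proof -
    have "(\<Prod>r\<in>?I. g B' r) = g B' (s+1) * (\<Prod>r\<in>?I-{s+1}. g B' r)"
      by (rule prod.remove[OF _ sI]) simp
    moreover have "(\<Prod>r\<in>?I-{s+1}. g B' r) = (\<Prod>r\<in>?I-{s+1}. g UNIV r)"
      by (rule prod.cong) (auto simp: g_def Bs_def)
    ultimately show ?thesis by simp
  qed
  have gU: "g UNIV (s+1) = 1" unfolding g_def Bs_def using pU by simp
  have gB: "g B (s+1) = prob P {u. R 1 u \<in> B}"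
    unfolding g_def Bs_def using prob_iid_marginal[OF iid sI] by simp
  have "prob P (ret_cell R s w \<inter> {u. R (s+1) u \<in> B}) = (\<Prod>r\<in>?I. g B r)"
    unfolding rect g_def by (rule prob_iid_rectangle[OF iid])
  moreover have "prob P (ret_cell R s w) = (\<Prod>r\<in>?I. g UNIV r)"
    using rect[of UNIV] prob_iid_rectangle[OF iid, of "Bs UNIV"] unfolding g_def by simp
  ultimately show ?thesis using split[of B] split[of UNIV] gU gB by simp
qed

lemma cond_ID:
  assumes "cond_I P cell T \<rho>" "t < T" "s < T" "meas cell (t+1) Z" "meas cell (s+1) Z'"
    and "\<forall>a. prob P (cell t w0 \<inter> {w. Z w = a}) / prob P (cell t w0)
        = prob P (cell s w1 \<inter> {w. Z' w = a}) / prob P (cell s w1)"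
    and "w \<in> cell t w0" "w' \<in> cell s w1"
  shows "\<rho> t (ind_at (t+1) Z) w = \<rho> s (ind_at (s+1) Z') w'"
  using assms(1) unfolding cond_I_def using assms(2-8) by simp

context acceptability_index
begin

definition stationary_one_step :: "real \<Rightarrow> (('d \<Rightarrow> real) \<Rightarrow> real) \<Rightarrow> bool" where
  "stationary_one_step x q \<longleftrightarrow> (\<forall>s k w. s < T \<longrightarrow> (\<forall>i. meas cell s (\<lambda>v. k v i)) \<longrightarrow>
    risk x s (ind_at (s+1) (\<lambda>v. \<Sum>i\<in>UNIV. R (s+1) v i * k v i)) w = q (k w))"

lemma meas_portfolio_return:
  assumes "\<And>i. meas cell s (\<lambda>v. k v i)"
  shows "meas cell (s+1) (\<lambda>v. \<Sum>i\<in>UNIV. R (s+1) v i * k v i)"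
  unfolding meas_def
proof (intro allI impI)
  fix u u' assume u: "u' \<in> cell (s+1) u"
  then have "R (s+1) u' = R (s+1) u" by (simp add: ret_cell_def)
  moreover have "k u' i = k u i" for i using measD[OF assms ret_cell_antimono[OF _ u]] by simp
  ultimately show "(\<Sum>i\<in>UNIV. R (s+1) u' i * k u' i) = (\<Sum>i\<in>UNIV. R (s+1) u i * k u i)" by simp
qed

text \<open>
  Given the current state, the one-period return of the weights \<open>k\<close> has the same conditional
  law at every node as the return of the constant weights \<open>k w\<close> at time \<open>0\<close>, so condition (I)
  identifies their risks.
\<close>

lemma stationary_one_step_cond_I:
  assumes cond: "cond_I P cell T (rho \<alpha> x)" and iid: "iid P R T"
    and P: "\<forall>w. 0 < P w" "(\<Sum>w\<in>UNIV. P w) = 1"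
  shows "stationary_one_step x (\<lambda>c. risk x 0 (ind_at 1 (\<lambda>v. \<Sum>i\<in>UNIV. R 1 v i * c i)) w0)"
  unfolding stationary_one_step_def
proof (intro allI impI)
  fix s :: nat and k :: "'w \<Rightarrow> 'd \<Rightarrow> real" and w :: 'w
  assume s: "s < T" and k: "\<forall>i. meas cell s (\<lambda>v. k v i)"
  define Z where "Z = (\<lambda>v. \<Sum>i\<in>UNIV. R (s+1) v i * k v i)"
  define Z' where "Z' = (\<lambda>v. \<Sum>i\<in>UNIV. R 1 v i * k w i)"
  have Z: "meas cell (s+1) Z" unfolding Z_def using k by (intro meas_portfolio_return) simp
  have Z': "meas cell (0+1) Z'" unfolding Z'_def using meas_portfolio_return[of 0 "\<lambda>_. k w"] by simp
  have law: "\<forall>a. prob P (cell s w \<inter> {u. Z u = a}) / prob P (cell s w) =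
        prob P (cell 0 w0 \<inter> {u. Z' u = a}) / prob P (cell 0 w0)"
  proof
    fix a
    define B where "B = {r. (\<Sum>i\<in>UNIV. r i * k w i) = a}"
    have "Z u = (\<Sum>i\<in>UNIV. R (s+1) u i * k w i)" if "u \<in> cell s w" for u
      using measD[OF k[rule_format] that] by (simp add: Z_def)
    then have "cell s w \<inter> {u. Z u = a} = cell s w \<inter> {u. R (s+1) u \<in> B}" by (auto simp: B_def)
    then have "prob P (cell s w \<inter> {u. Z u = a}) = prob P (cell s w) * prob P {u. R 1 u \<in> B}"
      using prob_ret_cell_inter_next[OF iid P(2) s] by simp
    moreover have "0 < prob P (cell s w)"
      unfolding prob_def by (rule sum_pos2[where i=w]) (use P in \<open>auto intro: less_imp_le\<close>)
    moreover have "cell 0 w0 = UNIV" "prob P UNIV = 1" using P(2) by (auto simp: ret_cell_def prob_def)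
    ultimately show "prob P (cell s w \<inter> {u. Z u = a}) / prob P (cell s w) =
        prob P (cell 0 w0 \<inter> {u. Z' u = a}) / prob P (cell 0 w0)" by (simp add: Z'_def B_def)
  qed
  have "rho \<alpha> x s (ind_at (s+1) Z) w = rho \<alpha> x 0 (ind_at (0+1) Z') w0"
    by (rule cond_ID[OF cond s _ Z Z' law]) (use s in simp_all)
  then show "risk x s (ind_at (s+1) (\<lambda>v. \<Sum>i\<in>UNIV. R (s+1) v i * k v i)) w =
      risk x 0 (ind_at 1 (\<lambda>v. \<Sum>i\<in>UNIV. R 1 v i * k w i)) w0"
    by (simp add: risk_def Z_def Z'_def)
qed

end

section \<open>Acceptability levels attainable by long-only strategies\<close>

context market
begin

text \<open>The one-period dividend is the wealth \<open>W\<^sub>s\<close> times the net return \<open>R\<^sub>s\<^sub>+\<^sub>1\<^sup>T k\<^sub>s - 1\<close>.\<close>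

lemma risk_dividend:
  assumes x: "0 < x" and q: "stationary_one_step x q" and h: "h \<in> PF t V"
    and V: "meas cell t V" "\<And>u. 0 < V u" and s: "t \<le> s" "s < T"
  shows "risk x s (ind_at (s+1) (divs R T t V h (s+1))) w =
         wealth R t V h s w * (q (weights R t V h s w) + 1)"
proof -
  let ?W = "wealth R t V h"
  define Z where "Z = (\<lambda>v. \<Sum>i\<in>UNIV. R (s+1) v i * weights R t V h s v i)"
  have W: "meas cell s (?W s)" "\<And>v. 0 < ?W s v"
    using meas_wealth[OF h V(1)] wealth_pos[OF h V(2)] s by auto
  have k: "meas cell s (\<lambda>v. weights R t V h s v i)" for i
    using measD[OF W(1)] measD[OF portfoliosD(1)[OF h s]] by (simp add: meas_def weights_def)
  have Z: "ind_at (s+1) Z \<in> PR"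
    unfolding Z_def using s by (intro ind_at_procs meas_portfolio_return k) simp
  have "?W (s+1) v = ?W s v * Z v" for v
    using W(2)[of v] s by (simp add: wealth_Suc Z_def weights_def sum_distrib_left)
  then have "ind_at (s+1) (divs R T t V h (s+1)) =
      padd (scale_from s (?W s) (ind_at (s+1) Z)) (ind_at (s+1) (\<lambda>v. - ?W s v))"
    using s by (auto simp: fun_eq_iff divs_def padd_def ind_at_def scale_from_def)
  then have "risk x s (ind_at (s+1) (divs R T t V h (s+1))) w =
      ?W s w * risk x s (ind_at (s+1) Z) w + ?W s w"
    using s risk_cash[OF x _ _ scale_from_procs[OF Z W(1)] meas_uminus[OF W(1)], of "s+1" w]
      risk_scale[OF x _ Z W] by simp
  moreover have "risk x s (ind_at (s+1) Z) w = q (weights R t V h s w)"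
    using q k s unfolding stationary_one_step_def Z_def by blast
  ultimately show ?thesis by (simp add: algebra_simps)
qed

lemma risk_divs_ge:
  assumes x: "0 < x" and stc: "strongly_tc cell T (rho \<alpha> x)" and q: "stationary_one_step x q"
    and h: "h \<in> PF t V" and V: "meas cell t V" "\<And>u. 0 < V u"
    and q_ge: "\<And>s w. t \<le> s \<Longrightarrow> s < T \<Longrightarrow> -1 \<le> q (weights R t V h s w)"
    and s: "t \<le> s" "s \<le> T"
  shows "- divs R T t V h s w \<le> risk x s (divs R T t V h) w"
  using s(2,1)
proof (induction s arbitrary: w rule: inc_induct)
  case base
  then show ?case using risk_terminal[OF x divs_procs[OF h V(1)]] by simp
next
  case (step s)
  have "0 \<le> wealth R t V h s w * (q (weights R t V h s w) + 1)"
    using wealth_pos[OF h V(2), of s w] q_ge[of s w] step by simp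
  moreover have "- divs R T t V h (s+1) v \<le> risk x (s+1) (divs R T t V h) v" for v
    using step by simp
  ultimately show ?case
    using risk_ge_one_step[OF x stc step(2) divs_procs[OF h V(1)], of w] risk_dividend[OF x q h V, of s w] step
    by simp
qed

lemma risk_divs_le:
  assumes x: "0 < x" and stc: "strongly_tc cell T (rho \<alpha> x)" and q: "stationary_one_step x q"
    and h: "h \<in> PF t V" and V: "meas cell t V" "\<And>u. 0 < V u"
    and q_le: "\<And>s w. t \<le> s \<Longrightarrow> s < T \<Longrightarrow> q (weights R t V h s w) \<le> -1"
    and s: "t \<le> s" "s \<le> T"
  shows "risk x s (divs R T t V h) w \<le> - divs R T t V h s w"
  using s(2,1)
proof (induction s arbitrary: w rule: inc_induct)
  case base
  then show ?case using risk_terminal[OF x divs_procs[OF h V(1)]] by simp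
next
  case (step s)
  have "wealth R t V h s w * (q (weights R t V h s w) + 1) \<le> 0"
    using wealth_pos[OF h V(2), of s w] q_le[of s w] step by (simp add: mult_nonneg_nonpos)
  moreover have "risk x (s+1) (divs R T t V h) v \<le> - divs R T t V h (s+1) v" for v
    using step by simp
  ultimately show ?case
    using risk_le_one_step[OF x stc step(2) divs_procs[OF h V(1)], of w] risk_dividend[OF x q h V, of s w] step
    by simp
qed

lemma acceptable_strategy_iff:
  assumes x: "0 < x" and stc: "strongly_tc cell T (rho \<alpha> x)" and q: "stationary_one_step x q"
    and t: "t < T" and V: "meas cell t V" "\<And>u. 0 < V u"
  shows "(\<exists>h\<in>PF t V. ereal x \<le> \<alpha> t (divs R T t V h) w) \<longleftrightarrow> (\<exists>c. simplex c \<and> q c \<le> -1)"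
proof
  assume "\<exists>h\<in>PF t V. ereal x \<le> \<alpha> t (divs R T t V h) w"
  then obtain h where h: "h \<in> PF t V" and acc: "ereal x \<le> \<alpha> t (divs R T t V h) w" by blast
  let ?D = "divs R T t V h"
  show "\<exists>c. simplex c \<and> q c \<le> -1"
  proof (rule ccontr)
    assume "\<not> ?thesis"
    then have q_gt: "-1 < q (weights R t V h s w')" if "t \<le> s" "s < T" for s w'
      using weights_simplex[OF h V(2) that, of w'] by (meson not_le)
    \<comment> \<open>then every one-period dividend, in particular the first, has positive risk\<close>
    have "- ?D (t+1) v \<le> risk x (t+1) ?D v" for v
      using t q_gt by (intro risk_divs_ge[OF x stc q h V]) (auto intro: less_imp_le)
    then have "risk x t (ind_at (t+1) (?D (t+1))) w \<le> risk x t ?D w + ?D t w"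
      by (rule risk_ge_one_step[OF x stc t divs_procs[OF h V(1)]])
    moreover have "0 < wealth R t V h t w * (q (weights R t V h t w) + 1)"
      using wealth_pos[OF h V(2), of t w] q_gt[of t w] t by simp
    moreover have "risk x t ?D w \<le> 0"
      using acc acceptable_iff_risk_nonpos[OF x _ divs_procs[OF h V(1)]] t by simp
    ultimately show False
      using risk_dividend[OF x q h V order_refl t, of w] by (simp add: divs_def)
  qed
next
  assume "\<exists>c. simplex c \<and> q c \<le> -1"
  then obtain c where c: "simplex c" "q c \<le> -1" by blast
  let ?h = "fixed_mix R t V c"
  have h: "?h \<in> PF t V" using fixed_mix_portfolio[OF c(1) V] .
  have "risk x t (divs R T t V ?h) w \<le> - divs R T t V ?h t w"
    using t c(2) weights_fixed_mix[OF c(1) V(2)] by (intro risk_divs_le[OF x stc q h V]) auto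
  then have "ereal x \<le> \<alpha> t (divs R T t V ?h) w"
    using acceptable_iff_risk_nonpos[OF x _ divs_procs[OF h V(1)]] t by (simp add: divs_def)
  then show "\<exists>h\<in>PF t V. ereal x \<le> \<alpha> t (divs R T t V h) w" using h by blast
qed

lemma portfolios_nonempty:
  assumes "meas cell t V" "\<And>u. 0 < V u"
  shows "PF t V \<noteq> {}"
proof -
  have "simplex (\<lambda>i::'d. 1 / real (card (UNIV :: 'd set)))" by (simp add: simplex_def)
  then show ?thesis using fixed_mix_portfolio[OF _ assms] by blast
qed

end

lemma SUP_le_SUP_by_levels:
  fixes f :: "'a \<Rightarrow> ereal" and g :: "'b \<Rightarrow> ereal"
  assumes B: "b0 \<in> B" "\<And>b. b \<in> B \<Longrightarrow> 0 \<le> g b"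
    and levels: "\<And>x. 0 < x \<Longrightarrow> \<exists>a\<in>A. ereal x \<le> f a \<Longrightarrow> \<exists>b\<in>B. ereal x \<le> g b"
  shows "(SUP a\<in>A. f a) \<le> (SUP b\<in>B. g b)"
proof (rule ccontr)
  assume "\<not> ?thesis"
  then have "(SUP b\<in>B. g b) < (SUP a\<in>A. f a)" by simp
  then obtain z where z: "(SUP b\<in>B. g b) < ereal z" "ereal z < (SUP a\<in>A. f a)"
    using ereal_dense2 by blast
  have "0 \<le> (SUP b\<in>B. g b)" using B(2)[OF B(1)] SUP_upper[OF B(1), of g] by (rule order_trans)
  then have "0 < ereal z" using z(1) by (rule le_less_trans)
  then have "0 < z" by simp
  moreover obtain a where "a \<in> A" "ereal z < f a" using z(2) by (auto simp: less_SUP_iff)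
  ultimately obtain b where b: "b \<in> B" "ereal z \<le> g b" using levels[of z] by (meson less_imp_le)
  have "g b \<le> (SUP b\<in>B. g b)" using b(1) by (rule SUP_upper)
  then show False using b(2) z(1) by simp
qed

theorem theorem3p2:
  fixes P :: "'w::finite \<Rightarrow> real"
    and R :: "nat \<Rightarrow> 'w \<Rightarrow> 'd::finite \<Rightarrow> real"
    and T :: nat
    and \<alpha> :: "nat \<Rightarrow> 'w proc \<Rightarrow> 'w \<Rightarrow> ereal"
  assumes "\<forall>w. 0 < P w" and "(\<Sum>w\<in>UNIV. P w) = 1"
    and "\<forall>s\<in>{1..T}. \<forall>w i. 0 < R s w i"
    and "iid P R T"
    and "dcai (ret_cell R) T \<alpha>"
    and "normalized (ret_cell R) T \<alpha>"
    and "right_cont (ret_cell R) T \<alpha>"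
    and "\<forall>x>0. strongly_tc (ret_cell R) T (rho \<alpha> x)"
    and "\<forall>x>0. cond_I P (ret_cell R) T (rho \<alpha> x)"
  shows "\<forall>t<T. \<forall>w w'. \<forall>V. meas (ret_cell R) t V \<longrightarrow> (\<forall>u. 0 < V u) \<longrightarrow>
           max_acc R T \<alpha> t V w = max_acc R T \<alpha> 0 (\<lambda>_. 1) w'"
proof (intro allI impI)
  interpret market R T \<alpha> using assms(3,5-7) by unfold_locales
  fix t w w' and V :: "'w \<Rightarrow> real"
  assume t: "t < T" and "meas (ret_cell R) t V" "\<forall>u. 0 < V u"
  then have V: "meas (ret_cell R) t V" "\<And>u. 0 < V u" by simp_all
  have V1: "meas (ret_cell R) 0 (\<lambda>_. 1)" "\<And>u. 0 < (\<lambda>_. 1 :: real) u" by simp_all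
  have levels: "(\<exists>h\<in>PF t V. ereal x \<le> \<alpha> t (divs R T t V h) w) \<longleftrightarrow>
      (\<exists>h\<in>PF 0 (\<lambda>_. 1). ereal x \<le> \<alpha> 0 (divs R T 0 (\<lambda>_. 1) h) w')" if x: "0 < x" for x
  proof -
    let ?q = "\<lambda>c. risk x 0 (ind_at 1 (\<lambda>v. \<Sum>i\<in>UNIV. R 1 v i * c i)) w'"
    have "stationary_one_step x ?q" "strongly_tc (ret_cell R) T (rho \<alpha> x)"
      using stationary_one_step_cond_I assms(1,2,4,8,9) x by auto
    then show ?thesis
      using acceptable_strategy_iff[OF x _ _ t V] acceptable_strategy_iff[OF x _ _ _ V1] t by simp
  qed
  obtain h0 h1 where h: "h0 \<in> PF 0 (\<lambda>_. 1)" "h1 \<in> PF t V"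
    using portfolios_nonempty[OF V] portfolios_nonempty[OF V1] by blast
  have nonneg: "0 \<le> \<alpha> s (divs R T s U h) v" if "h \<in> PF s U" "meas (ret_cell R) s U" "s \<le> T" for s U h v
    using alpha_nonneg[OF _ divs_procs] that by blast
  show "max_acc R T \<alpha> t V w = max_acc R T \<alpha> 0 (\<lambda>_. 1) w'"
    unfolding max_acc_def
  proof (rule antisym)
    show "(SUP h\<in>PF t V. \<alpha> t (divs R T t V h) w) \<le> (SUP h\<in>PF 0 (\<lambda>_. 1). \<alpha> 0 (divs R T 0 (\<lambda>_. 1) h) w')"
      using levels nonneg V1 by (intro SUP_le_SUP_by_levels[OF h(1)]) auto
    show "(SUP h\<in>PF 0 (\<lambda>_. 1). \<alpha> 0 (divs R T 0 (\<lambda>_. 1) h) w') \<le> (SUP h\<in>PF t V. \<alpha> t (divs R T t V h) w)"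
      using levels nonneg V t by (intro SUP_le_SUP_by_levels[OF h(2)]) auto
  qed
qed

end
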